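(* Let $a,b,c,\alpha,\beta,\gamma,\lambda\in\mathbb{R}$ with $\alpha=0$ whenever $\gamma\neq 0$, and let $\Omega\subset\mathbb{R}$ be a compact interval containing $0$ in its interior. Consider the one-input control-affine system on $\mathbb{R}^2$ (coordinates $(s,t)$) $$\dot s=\beta s+\omega b,\qquad \dot t=(\lambda+\beta)t+\tfrac12\alpha s^2+\gamma s+\omega(c+as),\qquad \omega\in\Omega,$$ i.e. with drift $f_0(s,t)=\big(\beta s,(\lambda+\beta)t+\tfrac12\alpha s^2+\gamma s\big)$ and control vector field $f_1(s,t)=(b,c+as)$. Then this system satisfies the Lie algebra rank condition if and only if $$b\cdot\Big(\big(b\alpha+a(\lambda-\beta)\big)^2+\big(b\gamma+c\lambda\big)^2\Big)\neq 0.$$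
   Context: A control-affine system $\dot x=f_0(x)+\omega f_1(x)$ on a manifold $M$ satisfies the Lie algebra rank condition (LARC) if the smallest Lie algebra of vector fields containing $f_0$ and $f_1$, evaluated at each point $x\in M$, spans the tangent space $T_xM$. This system is the linear control system induced on the homogeneous space $(\mathbb{R}\mathbf e_1\times\{0\})\backslash\mathbb{H}\simeq\mathbb{R}^2$ of the 3-dimensional Heisenberg group. *)

theory Defs
  imports "HOL-Analysis.Analysis"
begin

definition lie_bracket :: "('a::real_normed_vector \<Rightarrow> 'a) \<Rightarrow> ('a \<Rightarrow> 'a) \<Rightarrow> 'a \<Rightarrow> 'a" where
  "lie_bracket X Y = (\<lambda>x. frechet_derivative Y (at x) (X x) - frechet_derivative X (at x) (Y x))"

inductive_set lie_gen :: "('a::real_normed_vector \<Rightarrow> 'a) set \<Rightarrow> ('a \<Rightarrow> 'a) set"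
  for S :: "('a \<Rightarrow> 'a) set" where
  base: "X \<in> S \<Longrightarrow> X \<in> lie_gen S"
| add: "X \<in> lie_gen S \<Longrightarrow> Y \<in> lie_gen S \<Longrightarrow> (\<lambda>x. X x + Y x) \<in> lie_gen S"
| scale: "X \<in> lie_gen S \<Longrightarrow> (\<lambda>x. r *\<^sub>R X x) \<in> lie_gen S"
| bracket: "X \<in> lie_gen S \<Longrightarrow> Y \<in> lie_gen S \<Longrightarrow> lie_bracket X Y \<in> lie_gen S"

definition LARC :: "('a::euclidean_space \<Rightarrow> 'a) set \<Rightarrow> bool" where
  "LARC S \<longleftrightarrow> (\<forall>x. span ((\<lambda>X. X x) ` lie_gen S) = UNIV)"

end

theory Submission
  imports Defs
begin

text \<open>Both fields of the system belong to the six-dimensional Lie algebra of fields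
  \<open>(x\<^sub>1 + x\<^sub>2 s, x\<^sub>3 + x\<^sub>4 s + x\<^sub>5 s\<^sup>2 + x\<^sub>6 t)\<close>, so the generated Lie algebra can be handled
  through coefficients. With \<open>A = b\<alpha> + a(\<lambda> - \<beta>)\<close> and \<open>B = b\<gamma> + c\<lambda>\<close>, one computes
  \<open>[f\<^sub>1, [f\<^sub>0, f\<^sub>1]] = (0, -bA)\<close> and \<open>[f\<^sub>0, f\<^sub>1] + \<beta> f\<^sub>1 = (0, -(As + B))\<close>; together with
  \<open>f\<^sub>1 = (b, c + as)\<close> they span the plane everywhere when \<open>b \<noteq> 0\<close> and \<open>(A, B) \<noteq> 0\<close>.
  Conversely, if \<open>b = 0\<close> every generated field is tangent to the axis \<open>s = 0\<close>, and if
  \<open>A = B = 0\<close> every generated field is tangent to the parabola \<open>bt = cs + as\<^sup>2/2\<close>;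
  in both cases the values at the origin lie on a line.\<close>

lemma lie_gen_subset:
  assumes "S \<subseteq> L"
    and "\<And>X Y. X \<in> L \<Longrightarrow> Y \<in> L \<Longrightarrow> (\<lambda>x. X x + Y x) \<in> L"
    and "\<And>X r. X \<in> L \<Longrightarrow> (\<lambda>x. r *\<^sub>R X x) \<in> L"
    and "\<And>X Y. X \<in> L \<Longrightarrow> Y \<in> L \<Longrightarrow> lie_bracket X Y \<in> L"
  shows "lie_gen S \<subseteq> L"
proof
  fix X assume "X \<in> lie_gen S"
  then show "X \<in> L" by induction (use assms in auto)
qed

lemma not_LARC_if_values_in_proper_subspace:
  assumes "lie_gen S \<subseteq> L" and "\<And>X. X \<in> L \<Longrightarrow> X x \<in> W"
    and "subspace W" and "W \<noteq> UNIV"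
  shows "\<not> LARC S"
proof
  assume "LARC S"
  then have "span ((\<lambda>X. X x) ` lie_gen S) = UNIV" unfolding LARC_def by blast
  moreover have "span ((\<lambda>X. X x) ` lie_gen S) \<subseteq> W"
    using assms by (intro span_minimal) auto
  ultimately show False using \<open>W \<noteq> UNIV\<close> by blast
qed

lemma span_eq_UNIV_if_det_nonzero:
  fixes V :: "(real \<times> real) set"
  assumes "u \<in> span V" and "v \<in> span V" and "fst u * snd v - snd u * fst v \<noteq> 0"
  shows "span V = UNIV"
proof -
  obtain u1 u2 v1 v2 where uv: "u = (u1, u2)" "v = (v1, v2)" by fastforce
  define d where "d = u1 * v2 - u2 * v1"
  have "d \<noteq> 0" using assms(3) by (simp add: uv d_def)
  have "(x, y) \<in> span V" for x y
  proof -
    have "(x * v2 - y * v1) * u1 + (u1 * y - u2 * x) * v1 = x * d"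
      and "(x * v2 - y * v1) * u2 + (u1 * y - u2 * x) * v2 = y * d"
      by (simp_all add: d_def algebra_simps)
    then have "(x, y) = ((x * v2 - y * v1) / d) *\<^sub>R u + ((u1 * y - u2 * x) / d) *\<^sub>R v"
      using \<open>d \<noteq> 0\<close> by (simp add: uv add_divide_distrib [symmetric] nonzero_eq_divide_eq)
    also have "\<dots> \<in> span V" using assms by (intro span_add span_scale)
    finally show ?thesis .
  qed
  then show ?thesis by auto
qed

definition quad_field :: "real \<Rightarrow> real \<Rightarrow> real \<Rightarrow> real \<Rightarrow> real \<Rightarrow> real \<Rightarrow> real \<times> real \<Rightarrow> real \<times> real" where
  "quad_field x1 x2 x3 x4 x5 x6 =
     (\<lambda>(s, t). (x1 + x2 * s, x3 + x4 * s + x5 * s\<^sup>2 + x6 * t))"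

lemma quad_field_has_derivative:
  "(quad_field x1 x2 x3 x4 x5 x6 has_derivative
     (\<lambda>(u, v). (x2 * u, (x4 + 2 * x5 * fst p) * u + x6 * v))) (at p)"
  unfolding quad_field_def case_prod_beta'
  by (auto intro!: derivative_eq_intros simp: fun_eq_iff algebra_simps)

lemma lie_bracket_quad_field:
  "lie_bracket (quad_field x1 x2 x3 x4 x5 x6) (quad_field y1 y2 y3 y4 y5 y6) =
   quad_field (y2*x1 - x2*y1) 0 (y4*x1 + y6*x3 - x4*y1 - x6*y3)
      (y4*x2 + 2*y5*x1 + y6*x4 - x4*y2 - 2*x5*y1 - x6*y4)
      (2*y5*x2 + y6*x5 - 2*x5*y2 - x6*y5) 0"
  unfolding lie_bracket_def frechet_derivative_at[OF quad_field_has_derivative, symmetric]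
  by (simp add: fun_eq_iff quad_field_def algebra_simps power2_eq_square)

lemma quad_field_add:
  "(\<lambda>z. quad_field x1 x2 x3 x4 x5 x6 z + quad_field y1 y2 y3 y4 y5 y6 z) =
   quad_field (x1 + y1) (x2 + y2) (x3 + y3) (x4 + y4) (x5 + y5) (x6 + y6)"
  by (simp add: fun_eq_iff quad_field_def algebra_simps)

lemma quad_field_scale:
  "(\<lambda>z. r *\<^sub>R quad_field x1 x2 x3 x4 x5 x6 z) =
   quad_field (r * x1) (r * x2) (r * x3) (r * x4) (r * x5) (r * x6)"
  by (simp add: fun_eq_iff quad_field_def algebra_simps)

definition fields_tangent_to_axis :: "(real \<times> real \<Rightarrow> real \<times> real) set" where
  "fields_tangent_to_axis = {quad_field 0 x2 x3 x4 x5 x6 | x2 x3 x4 x5 x6. True}"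

text \<open>The three equations are the coefficients of \<open>s\<^sup>0, s\<^sup>1, s\<^sup>2\<close> in
  \<open>b X\<^sub>2 - (c + as) X\<^sub>1\<close> after substituting \<open>bt = cs + as\<^sup>2/2\<close>, i.e. tangency of
  \<open>(X\<^sub>1, X\<^sub>2)\<close> to that parabola.\<close>

definition fields_tangent_to_parabola :: "real \<Rightarrow> real \<Rightarrow> real \<Rightarrow> (real \<times> real \<Rightarrow> real \<times> real) set" where
  "fields_tangent_to_parabola b c a =
     {quad_field x1 x2 x3 x4 x5 x6 | x1 x2 x3 x4 x5 x6.
        b * x3 = c * x1 \<and> b * x4 + c * x6 = c * x2 + a * x1 \<and> 2 * b * x5 + a * x6 = 2 * a * x2}"

lemma lie_gen_tangent_to_axis:
  assumes "S \<subseteq> fields_tangent_to_axis"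
  shows "lie_gen S \<subseteq> fields_tangent_to_axis"
  using assms unfolding fields_tangent_to_axis_def
  by (rule lie_gen_subset) (auto simp: quad_field_add quad_field_scale lie_bracket_quad_field; blast)+

lemma lie_gen_tangent_to_parabola:
  assumes "b \<noteq> 0" and "S \<subseteq> fields_tangent_to_parabola b c a"
  shows "lie_gen S \<subseteq> fields_tangent_to_parabola b c a"
proof (rule lie_gen_subset[OF assms(2)])
  fix X r
  assume "X \<in> fields_tangent_to_parabola b c a"
  then obtain x1 x2 x3 x4 x5 x6
    where X: "X = quad_field x1 x2 x3 x4 x5 x6"
      and x: "b * x3 = c * x1" "b * x4 + c * x6 = c * x2 + a * x1" "2 * b * x5 + a * x6 = 2 * a * x2"
    unfolding fields_tangent_to_parabola_def by blast
  show "(\<lambda>x. r *\<^sub>R X x) \<in> fields_tangent_to_parabola b c a"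
    unfolding X quad_field_scale fields_tangent_to_parabola_def
    by (intro CollectI exI conjI, rule refl) (use x in algebra)+
next
  fix X Y
  assume "X \<in> fields_tangent_to_parabola b c a" and "Y \<in> fields_tangent_to_parabola b c a"
  then obtain x1 x2 x3 x4 x5 x6 y1 y2 y3 y4 y5 y6
    where X: "X = quad_field x1 x2 x3 x4 x5 x6"
      and x: "b * x3 = c * x1" "b * x4 + c * x6 = c * x2 + a * x1" "2 * b * x5 + a * x6 = 2 * a * x2"
      and Y: "Y = quad_field y1 y2 y3 y4 y5 y6"
      and y: "b * y3 = c * y1" "b * y4 + c * y6 = c * y2 + a * y1" "2 * b * y5 + a * y6 = 2 * a * y2"
    unfolding fields_tangent_to_parabola_def by blast
  show "(\<lambda>x. X x + Y x) \<in> fields_tangent_to_parabola b c a"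
    unfolding X Y quad_field_add fields_tangent_to_parabola_def
    by (intro CollectI exI conjI, rule refl) (use x y in algebra)+
  have solved: "x3 = c * x1 / b" "x4 = (c * x2 + a * x1 - c * x6) / b" "x5 = (2 * a * x2 - a * x6) / (2 * b)"
    "y3 = c * y1 / b" "y4 = (c * y2 + a * y1 - c * y6) / b" "y5 = (2 * a * y2 - a * y6) / (2 * b)"
    using x y assms(1) by (auto simp: field_simps)
  show "lie_bracket X Y \<in> fields_tangent_to_parabola b c a"
    unfolding X Y lie_bracket_quad_field fields_tangent_to_parabola_def
    by (intro CollectI exI conjI, rule refl) (simp_all add: solved assms(1) field_simps)
qed

lemma not_LARC_if_tangent_to_axis:
  assumes "S \<subseteq> fields_tangent_to_axis"
  shows "\<not> LARC S"
proof (rule not_LARC_if_values_in_proper_subspace)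
  show "lie_gen S \<subseteq> fields_tangent_to_axis" using assms by (rule lie_gen_tangent_to_axis)
  show "X (0, 0) \<in> {v. fst v = 0}" if "X \<in> fields_tangent_to_axis" for X
    using that by (auto simp: fields_tangent_to_axis_def quad_field_def)
  show "subspace {v :: real \<times> real. fst v = 0}" by (auto simp: subspace_def)
  have "(1, 0) \<notin> {v :: real \<times> real. fst v = 0}" by simp
  then show "{v :: real \<times> real. fst v = 0} \<noteq> UNIV" by blast
qed

lemma not_LARC_if_tangent_to_parabola:
  assumes "b \<noteq> 0" and "S \<subseteq> fields_tangent_to_parabola b c a"
  shows "\<not> LARC S"
proof (rule not_LARC_if_values_in_proper_subspace)
  show "lie_gen S \<subseteq> fields_tangent_to_parabola b c a"
    using assms by (rule lie_gen_tangent_to_parabola)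
  show "X (0, 0) \<in> {v. b * snd v = c * fst v}" if "X \<in> fields_tangent_to_parabola b c a" for X
    using that by (auto simp: fields_tangent_to_parabola_def quad_field_def)
  show "subspace {v :: real \<times> real. b * snd v = c * fst v}"
    by (auto simp: subspace_def algebra_simps)
  have "(0, 1) \<notin> {v :: real \<times> real. b * snd v = c * fst v}" using assms(1) by simp
  then show "{v :: real \<times> real. b * snd v = c * fst v} \<noteq> UNIV" by blast
qed

lemma LARC_quad_system:
  assumes "b \<noteq> 0" and "b * \<alpha> + a * (lam - \<beta>) \<noteq> 0 \<or> b * \<gamma> + c * lam \<noteq> 0"
  shows "LARC {quad_field 0 \<beta> 0 \<gamma> (\<alpha>/2) (lam + \<beta>), quad_field b 0 c a 0 0}"
    (is "LARC {?f0, ?f1}")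
  unfolding LARC_def
proof
  fix p :: "real \<times> real"
  obtain s t where p: "p = (s, t)" by fastforce
  define A where "A = b * \<alpha> + a * (lam - \<beta>)"
  define B where "B = b * \<gamma> + c * lam"
  let ?L = "lie_gen {?f0, ?f1}"
  let ?V = "span ((\<lambda>X. X p) ` ?L)"
  have value_in_span: "v \<in> ?V" if "X \<in> ?L" and "X p = v" for X v
    using that by (auto intro: span_base)
  have f1: "?f1 \<in> ?L" by (simp add: lie_gen.base)
  have f0f1: "lie_bracket ?f0 ?f1 \<in> ?L" by (simp add: lie_gen.base lie_gen.bracket)
  have control: "(b, c + a * s) \<in> ?V"
    by (rule value_in_span[OF f1]) (simp add: p quad_field_def)
  have vertical_const: "(0, - b * A) \<in> ?V"
    by (rule value_in_span[OF lie_gen.bracket[OF f1 f0f1]])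
      (unfold lie_bracket_quad_field, simp add: p quad_field_def A_def algebra_simps)
  have vertical_affine: "(0, - (A * s + B)) \<in> ?V"
    by (rule value_in_span[OF lie_gen.add[OF f0f1 lie_gen.scale[OF f1, of \<beta>]]])
      (unfold lie_bracket_quad_field, simp add: p quad_field_def A_def B_def algebra_simps)
  have "A \<noteq> 0 \<or> B \<noteq> 0" using assms(2) by (simp add: A_def B_def)
  then show "?V = UNIV"
  proof (cases "A = 0")
    case True
    then show ?thesis using \<open>A \<noteq> 0 \<or> B \<noteq> 0\<close> assms(1)
      by (intro span_eq_UNIV_if_det_nonzero[OF control vertical_affine]) simp
  next
    case False
    then show ?thesis using assms(1)
      by (intro span_eq_UNIV_if_det_nonzero[OF control vertical_const]) simp
  qed
qed

theorem proposition5: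
  fixes a b c \<alpha> \<beta> \<gamma> lam :: real and \<Omega> :: "real set"
  assumes "\<gamma> \<noteq> 0 \<Longrightarrow> \<alpha> = 0"
    and "\<exists>u v. u < 0 \<and> 0 < v \<and> \<Omega> = {u..v}"
  shows "LARC {(\<lambda>(s, t). (\<beta> * s, (lam + \<beta>) * t + 1/2 * \<alpha> * s^2 + \<gamma> * s)),
               (\<lambda>(s, t). (b, c + a * s))}
         \<longleftrightarrow> b * ((b * \<alpha> + a * (lam - \<beta>))^2 + (b * \<gamma> + c * lam)^2) \<noteq> 0"
proof -
  define A where "A = b * \<alpha> + a * (lam - \<beta>)"
  define B where "B = b * \<gamma> + c * lam"
  let ?S = "{quad_field 0 \<beta> 0 \<gamma> (\<alpha>/2) (lam + \<beta>), quad_field b 0 c a 0 0}"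
  have system: "{(\<lambda>(s, t). (\<beta> * s, (lam + \<beta>) * t + 1/2 * \<alpha> * s^2 + \<gamma> * s)),
               (\<lambda>(s, t). (b, c + a * s))} = ?S"
    by (auto simp: quad_field_def fun_eq_iff algebra_simps)
  have "LARC ?S \<longleftrightarrow> b \<noteq> 0 \<and> (A \<noteq> 0 \<or> B \<noteq> 0)"
  proof
    assume "LARC ?S"
    moreover have "?S \<subseteq> fields_tangent_to_axis" if "b = 0"
      using that unfolding fields_tangent_to_axis_def by blast
    moreover have "?S \<subseteq> fields_tangent_to_parabola b c a" if "A = 0" and "B = 0"
      using that unfolding A_def B_def fields_tangent_to_parabola_def
      by (auto intro!: exI simp: algebra_simps)
    ultimately show "b \<noteq> 0 \<and> (A \<noteq> 0 \<or> B \<noteq> 0)"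
      using not_LARC_if_tangent_to_axis not_LARC_if_tangent_to_parabola by blast
  qed (use LARC_quad_system in \<open>auto simp: A_def B_def\<close>)
  then show ?thesis
    unfolding system A_def[symmetric] B_def[symmetric] by (simp add: sum_power2_eq_zero_iff)
qed

end
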